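(* A $3$-ranked liner $X$ is Boolean if and only if every parallelogram in $X$ is Boolean.
   Context: A liner is a set $X$ of points with a family of subsets called lines such that any two distinct points lie in a unique line and every line contains at least two points. For distinct $x,y$, $\overline{xy}$ is the line through them and $\overline{xx}:=\{x\}$. A set is flat if it contains $\overline{xy}$ for all its distinct points; $\overline A$ is the smallest flat containing $A$; the rank $\|A\|$ is the smallest cardinality of $B\subseteq X$ with $A\subseteq\overline B$. $X$ is $3$-ranked if any flats $A\subseteq B$ with $\|A\|=\|B\|\le3$ are equal. A flat $A$ is subparallel to a flat $B$ if $A\subseteq\overline{\{a\}\cup B}$ for every $a\in A$; $A\parallel B$ means each is subparallel to the other. A parallelogram is a quadruple $abcd\in X^4$ with $\overline{ab}\parallel\overline{cd}\ne\overline{ab}$ and $\overline{bc}\parallel\overline{ad}\ne\overline{bc}$; it is Boolean if $\overline{ac}\parallel\overline{bd}$. $X$ is Boolean if for every quadruple $abcd\in X^4$, $\overline{ab}\cap\overline{cd}=\varnothing=\overline{bc}\cap\overline{ad}$ implies $\overline{ac}\cap\overline{bd}=\varnothing$. *)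

theory Defs
  imports "HOL-Library.Extended_Nat"
begin

definition liner :: "'a set \<Rightarrow> 'a set set \<Rightarrow> bool" where
  "liner X L \<longleftrightarrow>
     (\<forall>l\<in>L. l \<subseteq> X \<and> (\<exists>x y. x \<in> l \<and> y \<in> l \<and> x \<noteq> y)) \<and>
     (\<forall>x\<in>X. \<forall>y\<in>X. x \<noteq> y \<longrightarrow> (\<exists>!l. l \<in> L \<and> x \<in> l \<and> y \<in> l))"

definition line :: "'a set set \<Rightarrow> 'a \<Rightarrow> 'a \<Rightarrow> 'a set" where
  "line L x y = (if x = y then {x} else (THE l. l \<in> L \<and> x \<in> l \<and> y \<in> l))"

definition flat :: "'a set \<Rightarrow> 'a set set \<Rightarrow> 'a set \<Rightarrow> bool" where
  "flat X L A \<longleftrightarrow> A \<subseteq> X \<and> (\<forall>x\<in>A. \<forall>y\<in>A. x \<noteq> y \<longrightarrow> line L x y \<subseteq> A)"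

definition flat_hull :: "'a set \<Rightarrow> 'a set set \<Rightarrow> 'a set \<Rightarrow> 'a set" where
  "flat_hull X L A = \<Inter>{F. flat X L F \<and> A \<subseteq> F}"

text \<open>Rank: smallest cardinality of B \<subseteq> X with A \<subseteq> hull B; infinite cardinalities are
  collapsed to \<infinity> (only finite ranks \<le> 3 matter below).\<close>
definition rank :: "'a set \<Rightarrow> 'a set set \<Rightarrow> 'a set \<Rightarrow> enat" where
  "rank X L A = (if \<exists>B. B \<subseteq> X \<and> finite B \<and> A \<subseteq> flat_hull X L B
      then enat (LEAST n. \<exists>B. B \<subseteq> X \<and> finite B \<and> card B = n \<and> A \<subseteq> flat_hull X L B)
      else \<infinity>)"

definition ranked3 :: "'a set \<Rightarrow> 'a set set \<Rightarrow> bool" where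
  "ranked3 X L \<longleftrightarrow> (\<forall>A B. flat X L A \<and> flat X L B \<and> A \<subseteq> B \<and>
      rank X L A = rank X L B \<and> rank X L B \<le> 3 \<longrightarrow> A = B)"

definition subparallel :: "'a set \<Rightarrow> 'a set set \<Rightarrow> 'a set \<Rightarrow> 'a set \<Rightarrow> bool" where
  "subparallel X L A B \<longleftrightarrow> (\<forall>a\<in>A. A \<subseteq> flat_hull X L (insert a B))"

definition parallel :: "'a set \<Rightarrow> 'a set set \<Rightarrow> 'a set \<Rightarrow> 'a set \<Rightarrow> bool" where
  "parallel X L A B \<longleftrightarrow> subparallel X L A B \<and> subparallel X L B A"

definition parallelogram :: "'a set \<Rightarrow> 'a set set \<Rightarrow> 'a \<Rightarrow> 'a \<Rightarrow> 'a \<Rightarrow> 'a \<Rightarrow> bool" where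
  "parallelogram X L a b c d \<longleftrightarrow> a \<in> X \<and> b \<in> X \<and> c \<in> X \<and> d \<in> X \<and>
     parallel X L (line L a b) (line L c d) \<and> line L c d \<noteq> line L a b \<and>
     parallel X L (line L b c) (line L a d) \<and> line L a d \<noteq> line L b c"

definition boolean_parallelogram :: "'a set \<Rightarrow> 'a set set \<Rightarrow> 'a \<Rightarrow> 'a \<Rightarrow> 'a \<Rightarrow> 'a \<Rightarrow> bool" where
  "boolean_parallelogram X L a b c d \<longleftrightarrow>
     parallelogram X L a b c d \<and> parallel X L (line L a c) (line L b d)"

definition boolean_liner :: "'a set \<Rightarrow> 'a set set \<Rightarrow> bool" where
  "boolean_liner X L \<longleftrightarrow> (\<forall>a\<in>X. \<forall>b\<in>X. \<forall>c\<in>X. \<forall>d\<in>X.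
     line L a b \<inter> line L c d = {} \<and> line L b c \<inter> line L a d = {} \<longrightarrow>
     line L a c \<inter> line L b d = {})"

end

theory Submission
  imports Defs
begin

text \<open>In a 3-ranked liner every non-collinear triple of a plane (a flat of rank 3) spans
  that plane, so disjoint lines in a common plane are parallel, and a quadruple is a
  parallelogram exactly when it is coplanar with disjoint opposite sides. Subparallel lines that
  meet are nested. Hence in a Boolean liner the disjoint, coplanar diagonals of a parallelogram
  are parallel; conversely, if the diagonals of a quadruple with disjoint opposite sides meet,
  the quadruple is coplanar, hence a parallelogram, and parallel diagonals that meet coincide,
  which puts all four points on one line.\<close>

definition plane :: "'a set \<Rightarrow> 'a set set \<Rightarrow> 'a set \<Rightarrow> bool" where
  "plane X L P \<longleftrightarrow> flat X L P \<and> rank X L P = 3"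

lemma subset_flat_hull: "A \<subseteq> flat_hull X L A"
  unfolding flat_hull_def by blast

lemma flat_hull_minimal: "flat X L F \<Longrightarrow> A \<subseteq> F \<Longrightarrow> flat_hull X L A \<subseteq> F"
  unfolding flat_hull_def by blast

lemma flat_hull_mono: "A \<subseteq> B \<Longrightarrow> flat_hull X L A \<subseteq> flat_hull X L B"
  unfolding flat_hull_def by blast

lemma flat_hull_of_flat: "flat X L F \<Longrightarrow> flat_hull X L F = F"
  using flat_hull_minimal[of X L F F] subset_flat_hull[of F X L] by blast

lemma line_subset_flat: "flat X L F \<Longrightarrow> x \<in> F \<Longrightarrow> y \<in> F \<Longrightarrow> line L x y \<subseteq> F"
  unfolding flat_def line_def by (cases "x = y") auto

lemma subparallel_meet_subset:
  assumes "subparallel X L A F" "flat X L F" "p \<in> A" "p \<in> F"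
  shows "A \<subseteq> F"
proof -
  have "A \<subseteq> flat_hull X L (insert p F)"
    using assms(1,3) unfolding subparallel_def by blast
  then show ?thesis
    using assms(2,4) by (simp add: insert_absorb flat_hull_of_flat)
qed

lemma parallel_disjoint:
  assumes "parallel X L A B" "flat X L A" "flat X L B" "A \<noteq> B"
  shows "A \<inter> B = {}"
proof (rule ccontr)
  assume "A \<inter> B \<noteq> {}"
  then obtain p where "p \<in> A" "p \<in> B"
    by blast
  then have "A \<subseteq> B" "B \<subseteq> A"
    using assms(1-3) subparallel_meet_subset[of X L] unfolding parallel_def by metis+
  then show False
    using assms(4) by blast
qed

lemma card_le_2_subset_doubleton:
  assumes "finite B" "card B \<le> 2" "B \<subseteq> X" "x \<in> X"
  obtains p q where "p \<in> X" "q \<in> X" "B \<subseteq> {p, q}"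
proof -
  consider "card B = 0" | "card B = 1" | "card B = 2"
    using assms(2) by linarith
  then show ?thesis
  proof cases
    case 1
    then show ?thesis
      using that assms(1,4) by simp
  next
    case 2
    then obtain p where "B = {p}"
      by (auto simp: card_1_singleton_iff)
    then show ?thesis
      using that assms(3) by blast
  next
    case 3
    then obtain p q where "B = {p, q}"
      by (auto simp: card_2_iff)
    then show ?thesis
      using that assms(3) by blast
  qed
qed

locale liner_space =
  fixes X :: "'a set" and L :: "'a set set"
  assumes liner: "liner X L"
begin

lemma line_in_lines:
  assumes "x \<in> X" "y \<in> X" "x \<noteq> y"
  shows "line L x y \<in> L" "x \<in> line L x y" "y \<in> line L x y"
proof -
  have "\<exists>!l. l \<in> L \<and> x \<in> l \<and> y \<in> l"
    using liner assms unfolding liner_def by simp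
  then have "(THE l. l \<in> L \<and> x \<in> l \<and> y \<in> l) \<in> L \<and> x \<in> (THE l. l \<in> L \<and> x \<in> l \<and> y \<in> l)
      \<and> y \<in> (THE l. l \<in> L \<and> x \<in> l \<and> y \<in> l)"
    by (rule theI')
  then show "line L x y \<in> L" "x \<in> line L x y" "y \<in> line L x y"
    using assms(3) unfolding line_def by simp_all
qed

lemma left_in_line: "x \<in> X \<Longrightarrow> y \<in> X \<Longrightarrow> x \<in> line L x y"
  using line_in_lines by (cases "x = y") (auto simp: line_def)

lemma right_in_line: "x \<in> X \<Longrightarrow> y \<in> X \<Longrightarrow> y \<in> line L x y"
  using line_in_lines by (cases "x = y") (auto simp: line_def)

lemma line_subset:
  assumes "x \<in> X" "y \<in> X"
  shows "line L x y \<subseteq> X"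
  using assms liner line_in_lines(1)[OF assms] unfolding liner_def line_def by (cases "x = y") auto

lemma line_eqI:
  assumes "l \<in> L" "x \<in> l" "y \<in> l" "x \<noteq> y"
  shows "line L x y = l"
proof -
  have "x \<in> X" "y \<in> X"
    using liner assms(1-3) unfolding liner_def by blast+
  then show ?thesis
    using liner assms line_in_lines unfolding liner_def by metis
qed

lemma line_eq_if_in_line:
  assumes "x \<in> X" "y \<in> X" "x \<noteq> y" "z \<in> line L x y" "w \<in> line L x y" "z \<noteq> w"
  shows "line L z w = line L x y"
  using line_eqI[OF line_in_lines(1)[OF assms(1-3)] assms(4-6)] .

lemma flat_line:
  assumes "x \<in> X" "y \<in> X"
  shows "flat X L (line L x y)"
proof (cases "x = y")
  case True
  then show ?thesis
    using assms by (simp add: line_def flat_def)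
next
  case False
  then have "line L z w \<subseteq> line L x y" if "z \<in> line L x y" "w \<in> line L x y" "z \<noteq> w" for z w
    using line_eq_if_in_line[OF assms False that] by simp
  then show ?thesis
    unfolding flat_def using line_subset[OF assms] by blast
qed

lemma flat_carrier: "flat X L X"
  unfolding flat_def using line_subset by blast

lemma flat_flat_hull:
  assumes "A \<subseteq> X"
  shows "flat X L (flat_hull X L A)"
proof -
  have "flat_hull X L A \<subseteq> X"
    using flat_hull_minimal[OF flat_carrier assms] .
  moreover have "line L x y \<subseteq> F"
    if "x \<in> flat_hull X L A" "y \<in> flat_hull X L A" "flat X L F" "A \<subseteq> F" for x y F
    using that line_subset_flat[of X L F x y] unfolding flat_hull_def by blast
  ultimately show ?thesis
    unfolding flat_def flat_hull_def[of X L A] by blast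
qed

lemma flat_hull_pair_subset_line:
  assumes "p \<in> X" "q \<in> X"
  shows "flat_hull X L {p, q} \<subseteq> line L p q"
  using assms by (intro flat_hull_minimal flat_line) (auto intro: left_in_line right_in_line)

lemma points_distinct_if_lines_disjoint:
  assumes "a \<in> X" "b \<in> X" "c \<in> X" "d \<in> X" "line L a b \<inter> line L c d = {}"
  shows "a \<noteq> c" "a \<noteq> d" "b \<noteq> c" "b \<noteq> d" "c \<notin> line L a b"
  using assms left_in_line right_in_line by blast+

lemma rank_flat_hull_noncollinear:
  assumes "a \<in> X" "b \<in> X" "c \<in> X" "a \<noteq> b" "c \<notin> line L a b"
  shows "rank X L (flat_hull X L {a, b, c}) = 3"
proof -
  let ?P = "flat_hull X L {a, b, c}"
  have "c \<noteq> a" "c \<noteq> b"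
    using assms(5) left_in_line[OF assms(1,2)] right_in_line[OF assms(1,2)] by auto
  then have card_abc: "card {a, b, c} = 3"
    using assms(4) by simp
  have "3 \<le> card B" if B: "B \<subseteq> X" "finite B" "?P \<subseteq> flat_hull X L B" for B
  proof (rule ccontr)
    assume "\<not> 3 \<le> card B"
    then have "card B \<le> 2"
      by simp
    then obtain p q where pq: "p \<in> X" "q \<in> X" "B \<subseteq> {p, q}"
      using card_le_2_subset_doubleton[OF B(2) _ B(1) assms(1)] by blast
    have "?P \<subseteq> line L p q"
      using B(3) flat_hull_mono[OF pq(3)] flat_hull_pair_subset_line[OF pq(1,2)] by blast
    then have abc: "a \<in> line L p q" "b \<in> line L p q" "c \<in> line L p q"
      using subset_flat_hull[of "{a, b, c}" X L] by blast+
    then have "p \<noteq> q"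
      using assms(4) by (auto simp: line_def)
    then have "line L a b = line L p q"
      using line_eq_if_in_line[OF pq(1,2) _ abc(1,2) assms(4)] by blast
    then show False
      using abc(3) assms(5) by simp
  qed
  moreover have spans_abc: "\<exists>B. B \<subseteq> X \<and> finite B \<and> card B = 3 \<and> ?P \<subseteq> flat_hull X L B"
    using assms(1-3) card_abc by (intro exI[of _ "{a, b, c}"]) simp
  ultimately have "(LEAST n. \<exists>B. B \<subseteq> X \<and> finite B \<and> card B = n \<and> ?P \<subseteq> flat_hull X L B) = 3"
    by (intro Least_equality) blast+
  moreover have "\<exists>B. B \<subseteq> X \<and> finite B \<and> ?P \<subseteq> flat_hull X L B"
    using spans_abc by blast
  ultimately show ?thesis
    unfolding rank_def by (simp add: numeral_eq_enat)
qed

lemma plane_flat_hull_noncollinear: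
  assumes "a \<in> X" "b \<in> X" "c \<in> X" "a \<noteq> b" "c \<notin> line L a b"
  shows "plane X L (flat_hull X L {a, b, c})"
  unfolding plane_def using assms by (simp add: flat_flat_hull rank_flat_hull_noncollinear)

lemma plane_if_opposite_sides_disjoint:
  assumes "a \<in> X" "b \<in> X" "c \<in> X" "d \<in> X"
    and "line L a b \<inter> line L c d = {}" "line L b c \<inter> line L a d = {}"
  shows "plane X L (flat_hull X L {a, b, c})"
  by (rule plane_flat_hull_noncollinear[OF assms(1-3)
        points_distinct_if_lines_disjoint(1)[OF assms(2,3,1,4,6), symmetric]
        points_distinct_if_lines_disjoint(5)[OF assms(1-5)]])

lemma parallelogram_imp_disjoint_sides_coplanar:
  assumes "parallelogram X L a b c d"
  shows "line L a b \<inter> line L c d = {}" "line L b c \<inter> line L a d = {}"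
    and "d \<in> flat_hull X L {a, b, c}"
proof -
  have X: "a \<in> X" "b \<in> X" "c \<in> X" "d \<in> X"
    and ab_cd: "parallel X L (line L a b) (line L c d)" "line L c d \<noteq> line L a b"
    and bc_ad: "parallel X L (line L b c) (line L a d)" "line L a d \<noteq> line L b c"
    using assms unfolding parallelogram_def by auto
  show "line L a b \<inter> line L c d = {}"
    using parallel_disjoint[OF ab_cd(1) flat_line[OF X(1,2)] flat_line[OF X(3,4)]] ab_cd(2) by metis
  show "line L b c \<inter> line L a d = {}"
    using parallel_disjoint[OF bc_ad(1) flat_line[OF X(2,3)] flat_line[OF X(1,4)]] bc_ad(2) by metis
  let ?P = "flat_hull X L {a, b, c}"
  have flat_P: "flat X L ?P"
    using X by (simp add: flat_flat_hull)
  have abc_P: "a \<in> ?P" "b \<in> ?P" "c \<in> ?P"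
    using subset_flat_hull[of "{a, b, c}" X L] by auto
  then have "insert a (line L b c) \<subseteq> ?P"
    using line_subset_flat[OF flat_P abc_P(2,3)] by simp
  then have "flat_hull X L (insert a (line L b c)) \<subseteq> ?P"
    by (rule flat_hull_minimal[OF flat_P])
  moreover have "line L a d \<subseteq> flat_hull X L (insert a (line L b c))"
    using bc_ad(1) left_in_line[OF X(1,4)] unfolding parallel_def subparallel_def by blast
  ultimately show "d \<in> ?P"
    using right_in_line[OF X(1,4)] by blast
qed

lemma coplanar_if_diagonals_meet:
  assumes X: "a \<in> X" "b \<in> X" "c \<in> X" "d \<in> X" and "a \<noteq> b"
    and ab_cd: "line L a b \<inter> line L c d = {}"
    and p: "p \<in> line L a c" "p \<in> line L b d"
  shows "d \<in> flat_hull X L {a, b, c}"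
proof -
  note distinct = points_distinct_if_lines_disjoint[OF X ab_cd]
  let ?P = "flat_hull X L {a, b, c}"
  have flat_P: "flat X L ?P"
    using X by (simp add: flat_flat_hull)
  have abc_P: "a \<in> ?P" "b \<in> ?P" "c \<in> ?P"
    using subset_flat_hull[of "{a, b, c}" X L] by auto
  have "p \<noteq> b"
  proof
    assume "p = b"
    with p(1) have "b \<in> line L a c"
      by simp
    then have "line L a b = line L a c"
      by (rule line_eq_if_in_line[OF X(1,3) distinct(1) left_in_line[OF X(1,3)] _ \<open>a \<noteq> b\<close>])
    then show False
      using distinct(5) right_in_line[OF X(1,3)] by simp
  qed
  then have "line L b p = line L b d"
    using line_eq_if_in_line[OF X(2,4) distinct(4) left_in_line[OF X(2,4)] p(2)] by simp
  moreover have "line L b p \<subseteq> ?P"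
    using p(1) line_subset_flat[OF flat_P abc_P(1,3)] line_subset_flat[OF flat_P abc_P(2)] by blast
  ultimately show ?thesis
    using right_in_line[OF X(2,4)] by blast
qed

end

locale ranked3_liner = liner_space +
  assumes ranked3: "ranked3 X L"
begin

lemma flat_hull_noncollinear_eq_plane:
  assumes "plane X L P" "x \<in> P" "y \<in> P" "z \<in> P" "x \<noteq> y" "z \<notin> line L x y"
  shows "flat_hull X L {x, y, z} = P"
proof -
  have "P \<subseteq> X" and flat_P: "flat X L P"
    using assms(1) unfolding plane_def flat_def by auto
  then have "x \<in> X" "y \<in> X" "z \<in> X"
    using assms(2-4) by blast+
  then show ?thesis
    using ranked3 assms(1,5,6) flat_hull_minimal[OF flat_P, of "{x, y, z}"] assms(2-4)
    unfolding ranked3_def plane_def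
    by (simp add: flat_flat_hull rank_flat_hull_noncollinear)
qed

lemma subparallel_if_disjoint_in_plane:
  assumes "plane X L P" "u \<in> P" "v \<in> P" "x \<in> P" "y \<in> P" "x \<noteq> y"
    and "line L u v \<inter> line L x y = {}"
  shows "subparallel X L (line L u v) (line L x y)"
  unfolding subparallel_def
proof
  fix z assume z: "z \<in> line L u v"
  have flat_P: "flat X L P"
    using assms(1) unfolding plane_def by simp
  then have "x \<in> X" "y \<in> X"
    using assms(4,5) unfolding flat_def by blast+
  have uv_P: "line L u v \<subseteq> P"
    using flat_P assms(2,3) by (rule line_subset_flat)
  have "z \<notin> line L x y"
    using z assms(7) by blast
  then have "P = flat_hull X L {x, y, z}"
    using flat_hull_noncollinear_eq_plane[OF assms(1,4,5)] z uv_P assms(6) by blast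
  also have "\<dots> \<subseteq> flat_hull X L (insert z (line L x y))"
    using left_in_line[OF \<open>x \<in> X\<close> \<open>y \<in> X\<close>] right_in_line[OF \<open>x \<in> X\<close> \<open>y \<in> X\<close>]
    by (intro flat_hull_mono) blast
  finally show "line L u v \<subseteq> flat_hull X L (insert z (line L x y))"
    using uv_P by blast
qed

lemma parallel_if_disjoint_in_plane:
  assumes "plane X L P" "u \<in> P" "v \<in> P" "x \<in> P" "y \<in> P" "u \<noteq> v" "x \<noteq> y"
    and "line L u v \<inter> line L x y = {}"
  shows "parallel X L (line L u v) (line L x y)"
  unfolding parallel_def using assms subparallel_if_disjoint_in_plane[of P] by (simp add: Int_commute)

lemma parallelogram_iff_disjoint_sides_coplanar:
  "parallelogram X L a b c d \<longleftrightarrow> a \<in> X \<and> b \<in> X \<and> c \<in> X \<and> d \<in> X \<and>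
     line L a b \<inter> line L c d = {} \<and> line L b c \<inter> line L a d = {} \<and>
     d \<in> flat_hull X L {a, b, c}"
proof
  assume "parallelogram X L a b c d"
  then show "a \<in> X \<and> b \<in> X \<and> c \<in> X \<and> d \<in> X \<and>
     line L a b \<inter> line L c d = {} \<and> line L b c \<inter> line L a d = {} \<and>
     d \<in> flat_hull X L {a, b, c}"
    using parallelogram_imp_disjoint_sides_coplanar unfolding parallelogram_def by simp
next
  assume "a \<in> X \<and> b \<in> X \<and> c \<in> X \<and> d \<in> X \<and>
     line L a b \<inter> line L c d = {} \<and> line L b c \<inter> line L a d = {} \<and>
     d \<in> flat_hull X L {a, b, c}"
  then have X: "a \<in> X" "b \<in> X" "c \<in> X" "d \<in> X"
    and ab_cd: "line L a b \<inter> line L c d = {}" and bc_ad: "line L b c \<inter> line L a d = {}"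
    and d_P: "d \<in> flat_hull X L {a, b, c}"
    by simp_all
  note distinct = points_distinct_if_lines_disjoint[OF X ab_cd]
    points_distinct_if_lines_disjoint[OF X(2,3,1,4) bc_ad]
  have plane: "plane X L (flat_hull X L {a, b, c})"
    by (rule plane_if_opposite_sides_disjoint[OF X ab_cd bc_ad])
  have abc_P: "a \<in> flat_hull X L {a, b, c}" "b \<in> flat_hull X L {a, b, c}"
    "c \<in> flat_hull X L {a, b, c}"
    using subset_flat_hull[of "{a, b, c}" X L] by auto
  have "parallel X L (line L a b) (line L c d)"
    using parallel_if_disjoint_in_plane[OF plane abc_P(1,2) abc_P(3) d_P _ _ ab_cd] distinct by simp
  moreover have "parallel X L (line L b c) (line L a d)"
    using parallel_if_disjoint_in_plane[OF plane abc_P(2,3) abc_P(1) d_P _ _ bc_ad] distinct by simp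
  moreover have "line L c d \<noteq> line L a b"
    using distinct(5) left_in_line[OF X(3,4)] by blast
  moreover have "line L a d \<noteq> line L b c"
    using distinct(10) left_in_line[OF X(1,4)] by blast
  ultimately show "parallelogram X L a b c d"
    unfolding parallelogram_def using X by simp
qed

lemma boolean_parallelogram_if_boolean_liner:
  assumes "boolean_liner X L" "parallelogram X L a b c d"
  shows "boolean_parallelogram X L a b c d"
proof -
  have X: "a \<in> X" "b \<in> X" "c \<in> X" "d \<in> X"
    and ab_cd: "line L a b \<inter> line L c d = {}" and bc_ad: "line L b c \<inter> line L a d = {}"
    and d_P: "d \<in> flat_hull X L {a, b, c}"
    using assms(2) unfolding parallelogram_iff_disjoint_sides_coplanar by simp_all
  note distinct = points_distinct_if_lines_disjoint[OF X ab_cd]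
    points_distinct_if_lines_disjoint[OF X(2,3,1,4) bc_ad]
  have plane: "plane X L (flat_hull X L {a, b, c})"
    by (rule plane_if_opposite_sides_disjoint[OF X ab_cd bc_ad])
  have abc_P: "a \<in> flat_hull X L {a, b, c}" "b \<in> flat_hull X L {a, b, c}"
    "c \<in> flat_hull X L {a, b, c}"
    using subset_flat_hull[of "{a, b, c}" X L] by auto
  have "line L a c \<inter> line L b d = {}"
    using assms(1)[unfolded boolean_liner_def, rule_format, OF X conjI[OF ab_cd bc_ad]] .
  then have "parallel X L (line L a c) (line L b d)"
    using parallel_if_disjoint_in_plane[OF plane abc_P(1,3,2) d_P distinct(1,4)] by simp
  then show ?thesis
    using assms(2) unfolding boolean_parallelogram_def by simp
qed

lemma boolean_liner_if_parallelograms_boolean: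
  assumes "\<And>a b c d. parallelogram X L a b c d \<Longrightarrow> boolean_parallelogram X L a b c d"
  shows "boolean_liner X L"
  unfolding boolean_liner_def
proof (intro ballI impI)
  fix a b c d
  assume X: "a \<in> X" "b \<in> X" "c \<in> X" "d \<in> X"
    and "line L a b \<inter> line L c d = {} \<and> line L b c \<inter> line L a d = {}"
  then have ab_cd: "line L a b \<inter> line L c d = {}" and bc_ad: "line L b c \<inter> line L a d = {}"
    by simp_all
  note distinct = points_distinct_if_lines_disjoint[OF X ab_cd]
    points_distinct_if_lines_disjoint[OF X(2,3,1,4) bc_ad]
  show "line L a c \<inter> line L b d = {}"
  proof (rule ccontr)
    assume "line L a c \<inter> line L b d \<noteq> {}"
    then obtain p where p: "p \<in> line L a c" "p \<in> line L b d"
      by blast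
    have "d \<in> flat_hull X L {a, b, c}"
      by (rule coplanar_if_diagonals_meet[OF X distinct(6)[symmetric] ab_cd p])
    then have "parallelogram X L a b c d"
      unfolding parallelogram_iff_disjoint_sides_coplanar using X ab_cd bc_ad by simp
    then have "parallel X L (line L a c) (line L b d)"
      using assms unfolding boolean_parallelogram_def by simp
    then have "line L a c = line L b d"
      using parallel_disjoint[OF _ flat_line[OF X(1,3)] flat_line[OF X(2,4)]] p by blast
    then have "a \<in> line L b d"
      using left_in_line[OF X(1,3)] by simp
    then have "line L a b = line L b d"
      by (rule line_eq_if_in_line[OF X(2,4) distinct(4) _ left_in_line[OF X(2,4)] distinct(6)[symmetric]])
    then show False
      using ab_cd right_in_line[OF X(2,4)] right_in_line[OF X(3,4)] by blast
  qed
qed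

end

theorem theorem6p8p8:
  fixes X :: "'a set" and L :: "'a set set"
  assumes "liner X L" and "ranked3 X L"
  shows "boolean_liner X L \<longleftrightarrow>
    (\<forall>a b c d. parallelogram X L a b c d \<longrightarrow> boolean_parallelogram X L a b c d)"
proof -
  interpret ranked3_liner X L
    by unfold_locales (fact assms)+
  show ?thesis
    using boolean_parallelogram_if_boolean_liner boolean_liner_if_parallelograms_boolean by blast
qed

end
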